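(* Let $A$ be a synaptic algebra, $p,q\in P$, and put $r_p:=p\wedge(p^{\perp}\vee q)\wedge(p^{\perp}\vee q^{\perp})$ and $r_q:=q\wedge(p\vee q^{\perp})\wedge(p^{\perp}\vee q^{\perp})$. Then $pCq$ iff $r_p=r_q=0$ iff $r_pCr_q$.
   Context: Synaptic algebra (Foulis): $R$ is a real linear associative algebra with unit $1$, and $A\subseteq R$ is a real linear subspace with $1\in A$. For $a,b\in A$ write $aCb$ iff $ab=ba$; $C(a):=\{b\in A: aCb\}$; $CC(a):=\{b\in A: bCd \text{ for all } d\in C(a)\}$. $A$ is a synaptic algebra with enveloping algebra $R$ iff: (SA1) $A$ is a partially ordered archimedean real linear space with positive cone $A^+$, $1$ is an order unit, $\|\cdot\|$ the order-unit norm; (SA2) $a\in A\Rightarrow a^2\in A^+$; (SA3) $a,b\in A^+\Rightarrow aba\in A^+$; (SA4) if $a\in A$, $b\in A^+$, $aba=0$ then $ab=ba=0$; (SA5) if $a\in A^+$ there is $b\in A^+\cap CC(a)$ with $b^2=a$; (SA6) for $a\in A$ there is $p=p^2\in A$ with $ab=0\Leftrightarrow pb=0$ for all $b\in A$; (SA7) if $1\le a$ there is $b\in A$ with $ab=ba=1$; (SA8) if $a,b\in A$, $a_1\le a_2\le\cdots$ are pairwise commuting elements of $C(b)$ with $\|a-a_n\|\to0$, then $a\in C(b)$. $A$ is nondegenerate. $P:=\{p\in A:p=p^2\}$ with the order inherited from $A$ is an orthomodular lattice with orthocomplement $p^{\perp}:=1-p$, meet $\wedge$, join $\vee$. *)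

theory Defs
  imports Complex_Main
begin

text \<open>The enveloping algebra R is the type 'a (a real linear associative algebra with unit,
class real_algebra_1); A is a subset of R; Apos is the positive cone of A.\<close>

definition sa_le :: "'a::real_algebra_1 set \<Rightarrow> 'a \<Rightarrow> 'a \<Rightarrow> bool" where
  "sa_le Apos a b \<longleftrightarrow> b - a \<in> Apos"

definition comm_set :: "'a::real_algebra_1 set \<Rightarrow> 'a \<Rightarrow> 'a set" where
  "comm_set A a = {b \<in> A. a * b = b * a}"

definition bicomm_set :: "'a::real_algebra_1 set \<Rightarrow> 'a \<Rightarrow> 'a set" where
  "bicomm_set A a = {b \<in> A. \<forall>d \<in> comm_set A a. b * d = d * b}"

definition ou_norm :: "'a::real_algebra_1 set \<Rightarrow> 'a \<Rightarrow> real" where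
  "ou_norm Apos a = Inf {l::real. 0 < l \<and> sa_le Apos (- (l *\<^sub>R 1)) a \<and> sa_le Apos a (l *\<^sub>R 1)}"

definition synaptic_algebra :: "'a::real_algebra_1 set \<Rightarrow> 'a set \<Rightarrow> bool" where
  "synaptic_algebra A Apos \<longleftrightarrow>
    \<comment> \<open>A is a real linear subspace containing 1; nondegenerate\<close>
    0 \<in> A \<and> 1 \<in> A \<and> (0::'a) \<noteq> 1 \<and>
    (\<forall>a\<in>A. \<forall>b\<in>A. a + b \<in> A) \<and> (\<forall>c::real. \<forall>a\<in>A. c *\<^sub>R a \<in> A) \<and>
    \<comment> \<open>SA1: partially ordered (positive cone), archimedean, 1 an order unit\<close>
    Apos \<subseteq> A \<and>
    (\<forall>a\<in>Apos. \<forall>b\<in>Apos. a + b \<in> Apos) \<and>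
    (\<forall>c::real. \<forall>a\<in>Apos. 0 \<le> c \<longrightarrow> c *\<^sub>R a \<in> Apos) \<and>
    (\<forall>a\<in>Apos. - a \<in> Apos \<longrightarrow> a = 0) \<and>
    (\<forall>a\<in>A. \<forall>b\<in>A. (\<forall>n::nat. sa_le Apos (real n *\<^sub>R a) b) \<longrightarrow> sa_le Apos a 0) \<and>
    (\<forall>a\<in>A. \<exists>n::nat. sa_le Apos a (real n *\<^sub>R 1)) \<and>
    \<comment> \<open>SA2\<close>
    (\<forall>a\<in>A. a * a \<in> Apos) \<and>
    \<comment> \<open>SA3\<close>
    (\<forall>a\<in>Apos. \<forall>b\<in>Apos. a * b * a \<in> Apos) \<and>
    \<comment> \<open>SA4\<close>
    (\<forall>a\<in>A. \<forall>b\<in>Apos. a * b * a = 0 \<longrightarrow> a * b = 0 \<and> b * a = 0) \<and>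
    \<comment> \<open>SA5\<close>
    (\<forall>a\<in>Apos. \<exists>b\<in>Apos. b \<in> bicomm_set A a \<and> b * b = a) \<and>
    \<comment> \<open>SA6\<close>
    (\<forall>a\<in>A. \<exists>p\<in>A. p * p = p \<and> (\<forall>b\<in>A. a * b = 0 \<longleftrightarrow> p * b = 0)) \<and>
    \<comment> \<open>SA7\<close>
    (\<forall>a\<in>A. sa_le Apos 1 a \<longrightarrow> (\<exists>b\<in>A. a * b = 1 \<and> b * a = 1)) \<and>
    \<comment> \<open>SA8\<close>
    (\<forall>a\<in>A. \<forall>b\<in>A. \<forall>s::nat \<Rightarrow> 'a.
        (\<forall>n. s n \<in> comm_set A b) \<and> (\<forall>m n. s m * s n = s n * s m) \<and>
        (\<forall>n. sa_le Apos (s n) (s (Suc n))) \<and>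
        (\<lambda>n. ou_norm Apos (a - s n)) \<longlonglongrightarrow> 0
        \<longrightarrow> a \<in> comm_set A b)"

definition projections :: "'a::real_algebra_1 set \<Rightarrow> 'a set" where
  "projections A = {p \<in> A. p * p = p}"

definition proj_meet :: "'a::real_algebra_1 set \<Rightarrow> 'a set \<Rightarrow> 'a \<Rightarrow> 'a \<Rightarrow> 'a" where
  "proj_meet A Apos p q = (THE r. r \<in> projections A \<and> sa_le Apos r p \<and> sa_le Apos r q \<and>
      (\<forall>s\<in>projections A. sa_le Apos s p \<and> sa_le Apos s q \<longrightarrow> sa_le Apos s r))"

definition proj_join :: "'a::real_algebra_1 set \<Rightarrow> 'a set \<Rightarrow> 'a \<Rightarrow> 'a \<Rightarrow> 'a" where
  "proj_join A Apos p q = (THE r. r \<in> projections A \<and> sa_le Apos p r \<and> sa_le Apos q r \<and>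
      (\<forall>s\<in>projections A. sa_le Apos p s \<and> sa_le Apos q s \<longrightarrow> sa_le Apos r s))"

definition orthocomp :: "'a::real_algebra_1 \<Rightarrow> 'a" where
  "orthocomp p = 1 - p"

end

theory Submission
  imports Defs
begin

text \<open>
  With \<open>a = p \<and> q\<close> and \<open>b = p \<and> q\<^sup>\<perp>\<close>, De Morgan turns \<open>r\<^sub>p\<close> into
  \<open>(p - b) \<and> (1 - a) = p - a - b\<close>, so \<open>p\<close> is the orthogonal sum \<open>a + b + r\<^sub>p\<close>, and
  symmetrically \<open>q = a + (q \<and> p\<^sup>\<perp>) + r\<^sub>q\<close>. If \<open>pCq\<close> then \<open>a = pq\<close> and \<open>b = p - pq\<close>, so
  \<open>r\<^sub>p = 0\<close>; conversely \<open>p = a + b\<close> with \<open>a \<le> q\<close>, \<open>b \<le> q\<^sup>\<perp>\<close> commutes with \<open>q\<close>.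
  If \<open>r\<^sub>p\<close> and \<open>r\<^sub>q\<close> commute, their product is their meet, which lies below \<open>a\<close> yet is
  orthogonal to \<open>a\<close>, hence vanishes. Then \<open>r\<^sub>p q = 0\<close>, so \<open>r\<^sub>p \<le> b\<close>, which together with
  \<open>r\<^sub>p \<perp> b\<close> forces \<open>r\<^sub>p = 0\<close>; likewise \<open>r\<^sub>q = 0\<close>.
\<close>

locale synaptic =
  fixes A Apos :: "'a::real_algebra_1 set"
  assumes synaptic_algebra: "synaptic_algebra A Apos"
begin

lemma one_mem: "1 \<in> A"
  using synaptic_algebra unfolding synaptic_algebra_def by (elim conjE) simp

lemma add_mem: "a \<in> A \<Longrightarrow> b \<in> A \<Longrightarrow> a + b \<in> A"
  using synaptic_algebra unfolding synaptic_algebra_def by (elim conjE) simp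

lemma scaleR_mem: "a \<in> A \<Longrightarrow> c *\<^sub>R a \<in> A"
  using synaptic_algebra unfolding synaptic_algebra_def by (elim conjE) simp

lemma pos_mem: "a \<in> Apos \<Longrightarrow> a \<in> A"
  using synaptic_algebra unfolding synaptic_algebra_def by (elim conjE) (rule subsetD)

lemma pos_add: "a \<in> Apos \<Longrightarrow> b \<in> Apos \<Longrightarrow> a + b \<in> Apos"
  using synaptic_algebra unfolding synaptic_algebra_def by (elim conjE) simp

lemma pos_antisym: "a \<in> Apos \<Longrightarrow> - a \<in> Apos \<Longrightarrow> a = 0"
  using synaptic_algebra unfolding synaptic_algebra_def by (elim conjE) simp

lemma square_pos: "a \<in> A \<Longrightarrow> a * a \<in> Apos"
  using synaptic_algebra unfolding synaptic_algebra_def by (elim conjE) simp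

lemma sandwich_pos: "a \<in> Apos \<Longrightarrow> b \<in> Apos \<Longrightarrow> a * b * a \<in> Apos"
  using synaptic_algebra unfolding synaptic_algebra_def by (elim conjE) simp

lemma sandwich_eq_0_imp: "a \<in> A \<Longrightarrow> b \<in> Apos \<Longrightarrow> a * b * a = 0 \<Longrightarrow> a * b = 0 \<and> b * a = 0"
  using synaptic_algebra unfolding synaptic_algebra_def by (elim conjE) simp

lemma carrier_projection_exists:
  "a \<in> A \<Longrightarrow> \<exists>p\<in>A. p * p = p \<and> (\<forall>b\<in>A. a * b = 0 \<longleftrightarrow> p * b = 0)"
  using synaptic_algebra unfolding synaptic_algebra_def by (elim conjE) simp

lemma diff_mem: "a \<in> A \<Longrightarrow> b \<in> A \<Longrightarrow> a - b \<in> A"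
  using add_mem[of a "(-1) *\<^sub>R b"] scaleR_mem[of b "-1"] by simp

lemma pos_add_eq_0D: "a \<in> Apos \<Longrightarrow> b \<in> Apos \<Longrightarrow> a + b = 0 \<Longrightarrow> a = 0"
  using pos_antisym[of a] by (simp add: add_eq_0_iff)

abbreviation P :: "'a set" where "P \<equiv> projections A"

abbreviation le :: "'a \<Rightarrow> 'a \<Rightarrow> bool" (infix "\<preceq>" 50) where "x \<preceq> y \<equiv> sa_le Apos x y"

abbreviation meet :: "'a \<Rightarrow> 'a \<Rightarrow> 'a" where "meet \<equiv> proj_meet A Apos"

abbreviation join :: "'a \<Rightarrow> 'a \<Rightarrow> 'a" where "join \<equiv> proj_join A Apos"

lemma le_antisym: "x \<preceq> y \<Longrightarrow> y \<preceq> x \<Longrightarrow> x = y"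
  unfolding sa_le_def using pos_antisym[of "y - x"] by simp

lemma le_trans: "x \<preceq> y \<Longrightarrow> y \<preceq> z \<Longrightarrow> x \<preceq> z"
  unfolding sa_le_def using pos_add[of "z - y" "y - x"] by simp

lemma compl_le_compl_iff: "1 - y \<preceq> 1 - x \<longleftrightarrow> x \<preceq> y"
  unfolding sa_le_def by (simp add: algebra_simps)

lemma projection_mem: "x \<in> P \<Longrightarrow> x \<in> A"
  by (simp add: projections_def)

lemma projection_idem: "x \<in> P \<Longrightarrow> x * x = x"
  by (simp add: projections_def)

lemma projection_pos: "x \<in> P \<Longrightarrow> x \<in> Apos"
  using square_pos[of x] by (simp add: projections_def)

lemma one_minus_projection: "x \<in> P \<Longrightarrow> 1 - x \<in> P"
  using diff_mem[OF one_mem, of x] by (simp add: projections_def algebra_simps)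

lemma projection_compl_sandwich_eq_0:
  assumes x: "x \<in> P" and y: "y \<in> P" and "x * (1 - y) * x = 0"
  shows "x * y = x" "y * x = x"
proof -
  have "x * (1 - y) = 0 \<and> (1 - y) * x = 0"
    using sandwich_eq_0_imp[OF projection_mem[OF x] projection_pos[OF one_minus_projection[OF y]]]
      \<open>x * (1 - y) * x = 0\<close> .
  then show "x * y = x" "y * x = x"
    by (simp_all add: algebra_simps)
qed

lemma projection_le_imp_mult:
  assumes x: "x \<in> P" and y: "y \<in> P" and "x \<preceq> y"
  shows "x * y = x" "y * x = x"
proof -
  have "x * (y - x) * x \<in> Apos"
    using sandwich_pos[OF projection_pos[OF x]] \<open>x \<preceq> y\<close> by (simp add: sa_le_def)
  moreover have "x * (1 - y) * x \<in> Apos"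
    using sandwich_pos[OF projection_pos[OF x] projection_pos[OF one_minus_projection[OF y]]] .
  moreover have "x * (y - x) * x = - (x * (1 - y) * x)"
    using projection_idem[OF x] by (simp add: algebra_simps)
  ultimately have "x * (1 - y) * x = 0"
    using pos_antisym by auto
  then show "x * y = x" "y * x = x"
    using projection_compl_sandwich_eq_0[OF x y] by simp_all
qed

lemma projection_le_iff_mult_left:
  assumes x: "x \<in> P" and y: "y \<in> P"
  shows "x \<preceq> y \<longleftrightarrow> y * x = x"
proof
  assume "y * x = x"
  then have "x * (1 - y) * x = 0"
    by (simp add: algebra_simps mult.assoc)
  then have "x * y = x"
    using projection_compl_sandwich_eq_0[OF x y] by simp
  with \<open>y * x = x\<close> have "(y - x) * (y - x) = y - x"
    using projection_idem[OF x] projection_idem[OF y] by (simp add: algebra_simps)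
  moreover have "(y - x) * (y - x) \<in> Apos"
    using square_pos diff_mem projection_mem x y by blast
  ultimately show "x \<preceq> y"
    by (simp add: sa_le_def)
qed (use projection_le_imp_mult[OF x y] in blast)

lemma projection_le_iff_mult_right:
  assumes x: "x \<in> P" and y: "y \<in> P"
  shows "x \<preceq> y \<longleftrightarrow> x * y = x"
proof
  assume "x * y = x"
  then have "x * (1 - y) * x = 0"
    by (simp add: algebra_simps)
  then show "x \<preceq> y"
    using projection_compl_sandwich_eq_0[OF x y] projection_le_iff_mult_left[OF x y] by simp
qed (use projection_le_imp_mult[OF x y] in blast)

lemma projection_mult_eq_0_of_le_compl:
  assumes x: "x \<in> P" and y: "y \<in> P" and u: "u \<in> P"
    and "x \<preceq> u" and "y \<preceq> 1 - u"
  shows "x * y = 0" "y * x = 0"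
proof -
  have u': "1 - u \<in> P" using one_minus_projection[OF u] .
  have "u * (1 - u) = 0" "(1 - u) * u = 0"
    using projection_idem[OF u] by (simp_all add: algebra_simps)
  moreover have "x = x * u" "x = u * x"
    using projection_le_imp_mult[OF x u] \<open>x \<preceq> u\<close> by simp_all
  moreover have "y = (1 - u) * y" "y = y * (1 - u)"
    using projection_le_imp_mult[OF y u'] \<open>y \<preceq> 1 - u\<close> by simp_all
  ultimately show "x * y = 0" "y * x = 0"
    by (metis mult.assoc mult_zero_left mult_zero_right)+
qed

definition is_meet :: "'a \<Rightarrow> 'a \<Rightarrow> 'a \<Rightarrow> bool" where
  "is_meet x y r \<longleftrightarrow> r \<in> P \<and> r \<preceq> x \<and> r \<preceq> y \<and> (\<forall>s\<in>P. s \<preceq> x \<and> s \<preceq> y \<longrightarrow> s \<preceq> r)"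

definition is_join :: "'a \<Rightarrow> 'a \<Rightarrow> 'a \<Rightarrow> bool" where
  "is_join x y r \<longleftrightarrow> r \<in> P \<and> x \<preceq> r \<and> y \<preceq> r \<and> (\<forall>s\<in>P. x \<preceq> s \<and> y \<preceq> s \<longrightarrow> r \<preceq> s)"

lemma proj_meet_eqI: "is_meet x y r \<Longrightarrow> meet x y = r"
  unfolding proj_meet_def is_meet_def[symmetric]
  by (rule the_equality) (auto simp: is_meet_def intro: le_antisym)

lemma proj_join_eqI: "is_join x y r \<Longrightarrow> join x y = r"
  unfolding proj_join_def is_join_def[symmetric]
  by (rule the_equality) (auto simp: is_join_def intro: le_antisym)

text \<open>The join of \<open>x\<close> and \<open>y\<close> is the carrier projection of \<open>x + y\<close> provided by SA6.\<close>

lemma is_join_exists: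
  assumes x: "x \<in> P" and y: "y \<in> P"
  shows "\<exists>c. is_join x y c"
proof -
  obtain c where "c \<in> A" and "c * c = c" and annihilator: "\<forall>b\<in>A. (x + y) * b = 0 \<longleftrightarrow> c * b = 0"
    using carrier_projection_exists[OF add_mem[OF projection_mem[OF x] projection_mem[OF y]]] by blast
  then have c: "c \<in> P" by (simp add: projections_def)
  have c': "1 - c \<in> P" using one_minus_projection[OF c] .
  have "c * (1 - c) = 0" using \<open>c * c = c\<close> by (simp add: algebra_simps)
  then have "(x + y) * (1 - c) = 0"
    using annihilator projection_mem[OF c'] by blast
  moreover have "(1 - c) * x * (1 - c) + (1 - c) * y * (1 - c) = (1 - c) * ((x + y) * (1 - c))"
    by (simp add: algebra_simps)
  ultimately have "(1 - c) * x * (1 - c) + (1 - c) * y * (1 - c) = 0"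
    by simp
  moreover have "(1 - c) * x * (1 - c) \<in> Apos" "(1 - c) * y * (1 - c) \<in> Apos"
    using sandwich_pos projection_pos c' x y by blast+
  ultimately have "(1 - c) * x * (1 - c) = 0" "(1 - c) * y * (1 - c) = 0"
    using pos_add_eq_0D[of "(1 - c) * x * (1 - c)"] pos_add_eq_0D[of "(1 - c) * y * (1 - c)"]
    by (simp_all add: add.commute)
  then have "(1 - c) * x = 0" "(1 - c) * y = 0"
    using sandwich_eq_0_imp[OF projection_mem[OF c'] projection_pos] x y by blast+
  then have "x \<preceq> c" "y \<preceq> c"
    using projection_le_iff_mult_left c x y by (simp_all add: algebra_simps)
  moreover have "c \<preceq> s" if s: "s \<in> P" and "x \<preceq> s" "y \<preceq> s" for s
  proof -
    have "(x + y) * (1 - s) = 0"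
      using projection_le_iff_mult_right s x y \<open>x \<preceq> s\<close> \<open>y \<preceq> s\<close> by (simp add: algebra_simps)
    then have "c * (1 - s) = 0"
      using annihilator projection_mem[OF one_minus_projection[OF s]] by blast
    then show "c \<preceq> s"
      using projection_le_iff_mult_right[OF c s] by (simp add: algebra_simps)
  qed
  ultimately show ?thesis
    using c unfolding is_join_def by blast
qed

lemma is_meet_compl_of_is_join:
  assumes "is_join (1 - x) (1 - y) c"
  shows "is_meet x y (1 - c)"
  unfolding is_meet_def
proof (intro conjI ballI impI)
  show "1 - c \<in> P" "1 - c \<preceq> x" "1 - c \<preceq> y"
    using assms one_minus_projection compl_le_compl_iff[of _ "1 - c"] by (simp_all add: is_join_def)
  fix s assume "s \<in> P" and "s \<preceq> x \<and> s \<preceq> y"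
  then have "c \<preceq> 1 - s"
    using assms one_minus_projection compl_le_compl_iff by (simp add: is_join_def)
  then show "s \<preceq> 1 - c"
    using compl_le_compl_iff[of "1 - c" s] by simp
qed

lemma is_join_proj_join:
  assumes "x \<in> P" "y \<in> P"
  shows "is_join x y (join x y)"
proof -
  obtain c where "is_join x y c"
    using is_join_exists assms by blast
  then show ?thesis
    using proj_join_eqI by simp
qed

lemma is_meet_proj_meet:
  assumes "x \<in> P" "y \<in> P"
  shows "is_meet x y (meet x y)"
proof -
  obtain c where "is_join (1 - x) (1 - y) c"
    using is_join_exists one_minus_projection assms by blast
  then have "is_meet x y (1 - c)"
    by (rule is_meet_compl_of_is_join)
  then show ?thesis
    using proj_meet_eqI by simp
qed

lemma proj_meet_mem: "x \<in> P \<Longrightarrow> y \<in> P \<Longrightarrow> meet x y \<in> P"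
  using is_meet_proj_meet is_meet_def by blast

lemma proj_meet_le_left: "x \<in> P \<Longrightarrow> y \<in> P \<Longrightarrow> meet x y \<preceq> x"
  using is_meet_proj_meet is_meet_def by blast

lemma proj_meet_le_right: "x \<in> P \<Longrightarrow> y \<in> P \<Longrightarrow> meet x y \<preceq> y"
  using is_meet_proj_meet is_meet_def by blast

lemma le_proj_meetI: "x \<in> P \<Longrightarrow> y \<in> P \<Longrightarrow> s \<in> P \<Longrightarrow> s \<preceq> x \<Longrightarrow> s \<preceq> y \<Longrightarrow> s \<preceq> meet x y"
  using is_meet_proj_meet is_meet_def by blast

lemma proj_join_mem: "x \<in> P \<Longrightarrow> y \<in> P \<Longrightarrow> join x y \<in> P"
  using is_join_proj_join is_join_def by blast

lemma proj_meet_commute: "x \<in> P \<Longrightarrow> y \<in> P \<Longrightarrow> meet x y = meet y x"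
  using is_meet_proj_meet[of y x] by (intro proj_meet_eqI) (auto simp: is_meet_def)

lemma proj_join_commute: "x \<in> P \<Longrightarrow> y \<in> P \<Longrightarrow> join x y = join y x"
  using is_join_proj_join[of y x] by (intro proj_join_eqI) (auto simp: is_join_def)

lemma proj_join_compl:
  assumes "x \<in> P" "y \<in> P"
  shows "join (1 - x) (1 - y) = 1 - meet x y"
proof -
  have "is_join (1 - x) (1 - y) (join (1 - x) (1 - y))"
    using is_join_proj_join one_minus_projection assms by blast
  then have "meet x y = 1 - join (1 - x) (1 - y)"
    by (intro proj_meet_eqI is_meet_compl_of_is_join)
  then show ?thesis
    by simp
qed

lemma mult_mem_of_commute:
  assumes x: "x \<in> P" and y: "y \<in> P" and "x * y = y * x"
  shows "x * y \<in> A"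
proof -
  have "(x + y) * (x + y) - x - y = 2 *\<^sub>R (x * y)"
    using projection_idem[OF x] projection_idem[OF y] \<open>x * y = y * x\<close>
    by (simp add: algebra_simps scaleR_2)
  moreover have "(x + y) * (x + y) \<in> A"
    using pos_mem[OF square_pos[OF add_mem[OF projection_mem[OF x] projection_mem[OF y]]]] .
  then have "(x + y) * (x + y) - x - y \<in> A"
    using diff_mem projection_mem x y by blast
  ultimately have "2 *\<^sub>R (x * y) \<in> A"
    by simp
  then have "(1/2 :: real) *\<^sub>R (2 *\<^sub>R (x * y)) \<in> A"
    by (rule scaleR_mem)
  then show ?thesis
    by simp
qed

lemma proj_meet_eq_mult_of_commute:
  assumes x: "x \<in> P" and y: "y \<in> P" and "x * y = y * x"
  shows "meet x y = x * y"
proof (rule proj_meet_eqI)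
  have "x * y * (x * y) = x * (y * x) * y"
    by (simp add: mult.assoc)
  also have "\<dots> = x * (x * y) * y"
    using \<open>x * y = y * x\<close> by simp
  also have "\<dots> = x * x * (y * y)"
    by (simp add: mult.assoc)
  finally have "x * y * (x * y) = x * x * (y * y)" .
  then have xy: "x * y \<in> P"
    using mult_mem_of_commute[OF assms] projection_idem[OF x] projection_idem[OF y]
    by (simp add: projections_def)
  have "x * y \<preceq> x"
    using projection_le_iff_mult_left[OF xy x] projection_idem[OF x] by (simp add: mult.assoc[symmetric])
  moreover have "x * y \<preceq> y"
    using projection_le_iff_mult_right[OF xy y] projection_idem[OF y] by (simp add: mult.assoc)
  moreover have "s \<preceq> x * y" if s: "s \<in> P" and "s \<preceq> x" "s \<preceq> y" for s
    using projection_le_iff_mult_right[OF s] s x y xy \<open>s \<preceq> x\<close> \<open>s \<preceq> y\<close>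
    by (simp add: mult.assoc[symmetric])
  ultimately show "is_meet x y (x * y)"
    using xy unfolding is_meet_def by blast
qed

lemma proj_meet_compl_of_le:
  assumes x: "x \<in> P" and y: "y \<in> P" and "y \<preceq> x"
  shows "meet x (1 - y) = x - y"
proof -
  have "x * y = y" "y * x = y"
    using projection_le_imp_mult[OF y x] \<open>y \<preceq> x\<close> by simp_all
  then have "x * (1 - y) = (1 - y) * x" and "x * (1 - y) = x - y"
    by (simp_all add: algebra_simps)
  then show ?thesis
    using proj_meet_eq_mult_of_commute[OF x one_minus_projection[OF y]] by simp
qed

text \<open>The paper's \<open>r\<^sub>p\<close> is \<open>generic_part p q\<close>, and \<open>r\<^sub>q\<close> is \<open>generic_part q p\<close>.\<close>

definition generic_part :: "'a \<Rightarrow> 'a \<Rightarrow> 'a" where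
  "generic_part p q = meet (meet p (join (1 - p) q)) (join (1 - p) (1 - q))"

lemma generic_part_eq:
  assumes p: "p \<in> P" and q: "q \<in> P"
  shows "generic_part p q = p - meet p q - meet p (1 - q)"
proof -
  define a where "a = meet p q"
  define b where "b = meet p (1 - q)"
  have q': "1 - q \<in> P" using one_minus_projection[OF q] .
  have a: "a \<in> P" "a \<preceq> p" "a \<preceq> q"
    unfolding a_def using proj_meet_mem proj_meet_le_left proj_meet_le_right p q by blast+
  have b: "b \<in> P" "b \<preceq> p" "b \<preceq> 1 - q"
    unfolding b_def using proj_meet_mem proj_meet_le_left proj_meet_le_right p q' by blast+
  have join_b: "join (1 - p) q = 1 - b"
    using proj_join_compl[OF p q'] unfolding b_def by simp
  have join_a: "join (1 - p) (1 - q) = 1 - a"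
    using proj_join_compl[OF p q] unfolding a_def .
  have meet_b: "meet p (1 - b) = p - b"
    using proj_meet_compl_of_le[OF p b(1,2)] .
  have meet_a: "meet (p - b) (1 - a) = p - b - a"
  proof -
    have "p - b \<in> P"
      using proj_meet_mem[OF p one_minus_projection[OF b(1)]] unfolding meet_b .
    moreover have "a * (p - b) = a"
      using projection_le_imp_mult[OF a(1) p a(2)]
        projection_mult_eq_0_of_le_compl[OF a(1) b(1) q a(3) b(3)]
      by (simp add: right_diff_distrib)
    ultimately show ?thesis
      using proj_meet_compl_of_le a(1) projection_le_iff_mult_right by blast
  qed
  show ?thesis
    unfolding generic_part_def join_a join_b meet_b meet_a
    by (simp add: a_def b_def)
qed

lemma generic_part_mem: "p \<in> P \<Longrightarrow> q \<in> P \<Longrightarrow> generic_part p q \<in> P"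
  unfolding generic_part_def by (intro proj_meet_mem proj_join_mem one_minus_projection)

lemma generic_part_le: "p \<in> P \<Longrightarrow> q \<in> P \<Longrightarrow> generic_part p q \<preceq> p"
  unfolding generic_part_def
  by (meson le_trans proj_meet_le_left proj_meet_mem proj_join_mem one_minus_projection)

lemma generic_part_mult_meet:
  assumes p: "p \<in> P" and q: "q \<in> P"
  shows "generic_part p q * meet p q = 0" "generic_part p q * meet p (1 - q) = 0"
proof -
  define a where "a = meet p q"
  define b where "b = meet p (1 - q)"
  have q': "1 - q \<in> P" using one_minus_projection[OF q] .
  have a: "a \<in> P" "a \<preceq> p" "a \<preceq> q"
    unfolding a_def using proj_meet_mem proj_meet_le_left proj_meet_le_right p q by blast+
  have b: "b \<in> P" "b \<preceq> p" "b \<preceq> 1 - q"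
    unfolding b_def using proj_meet_mem proj_meet_le_left proj_meet_le_right p q' by blast+
  have "a * b = 0" "b * a = 0"
    using projection_mult_eq_0_of_le_compl[OF a(1) b(1) q a(3) b(3)] by simp_all
  moreover have "p * a = a" "p * b = b"
    using projection_le_imp_mult(2)[OF a(1) p a(2)] projection_le_imp_mult(2)[OF b(1) p b(2)] .
  moreover have "a * a = a" "b * b = b"
    using projection_idem[OF a(1)] projection_idem[OF b(1)] .
  ultimately show "generic_part p q * a = 0" "generic_part p q * b = 0"
    unfolding generic_part_eq[OF p q] a_def[symmetric] b_def[symmetric]
    by (simp_all add: left_diff_distrib)
qed

lemma generic_part_eq_0_of_commute:
  assumes p: "p \<in> P" and q: "q \<in> P" and "p * q = q * p"
  shows "generic_part p q = 0"
proof -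
  have "meet p q = p * q"
    using proj_meet_eq_mult_of_commute[OF assms] .
  moreover have "meet p (1 - q) = p * (1 - q)"
    using proj_meet_eq_mult_of_commute[OF p one_minus_projection[OF q]] \<open>p * q = q * p\<close>
    by (simp add: algebra_simps)
  ultimately show ?thesis
    unfolding generic_part_eq[OF p q] by (simp add: algebra_simps)
qed

lemma commute_of_generic_part_eq_0:
  assumes p: "p \<in> P" and q: "q \<in> P" and "generic_part p q = 0"
  shows "p * q = q * p"
proof -
  define a where "a = meet p q"
  define b where "b = meet p (1 - q)"
  have q': "1 - q \<in> P" using one_minus_projection[OF q] .
  have "p = a + b"
    using \<open>generic_part p q = 0\<close> unfolding generic_part_eq[OF p q] a_def b_def
    by (simp add: algebra_simps)
  moreover have "a * q = a" "q * a = a"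
    unfolding a_def using projection_le_imp_mult[OF proj_meet_mem[OF p q] q proj_meet_le_right[OF p q]] .
  moreover have "b * (1 - q) = b" "(1 - q) * b = b"
    unfolding b_def using projection_le_imp_mult[OF proj_meet_mem[OF p q'] q' proj_meet_le_right[OF p q']] .
  then have "b * q = 0" "q * b = 0"
    by (simp_all add: algebra_simps)
  ultimately show ?thesis
    by (simp add: algebra_simps)
qed

lemma generic_part_eq_0_of_commute_generic_part:
  assumes p: "p \<in> P" and q: "q \<in> P"
    and "generic_part p q * generic_part q p = generic_part q p * generic_part p q"
  shows "generic_part p q = 0"
proof -
  define e where "e = generic_part p q"
  define f where "f = generic_part q p"
  define a where "a = meet p q"
  define b where "b = meet p (1 - q)"
  define c where "c = meet q (1 - p)"
  have p': "1 - p \<in> P" and q': "1 - q \<in> P"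
    using one_minus_projection p q by blast+
  have e: "e \<in> P" "e \<preceq> p"
    unfolding e_def using generic_part_mem generic_part_le p q by blast+
  have f: "f \<in> P" "f \<preceq> q"
    unfolding f_def using generic_part_mem generic_part_le p q by blast+
  have "e * a = 0" "e * b = 0"
    unfolding e_def a_def b_def using generic_part_mult_meet[OF p q] .
  have "e * f = f * e"
    using assms(3) unfolding e_def f_def .
  then have "meet e f = e * f"
    using proj_meet_eq_mult_of_commute[OF e(1) f(1)] by simp
  then have ef: "e * f \<in> P" "e * f \<preceq> e" "e * f \<preceq> f"
    using proj_meet_mem proj_meet_le_left proj_meet_le_right e(1) f(1) by metis+
  have "e * f \<preceq> a"
    unfolding a_def using le_proj_meetI[OF p q ef(1)] le_trans ef(2,3) e(2) f(2) by blast
  then have "e * f = f * (e * a)"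
    using projection_le_iff_mult_right[OF ef(1)] proj_meet_mem[OF p q] \<open>e * f = f * e\<close>
    unfolding a_def by (simp add: mult.assoc)
  then have "e * f = 0"
    using \<open>e * a = 0\<close> by simp
  have "q = f + a + c"
    using generic_part_eq[OF q p] proj_meet_commute[OF p q]
    unfolding f_def a_def c_def by (simp add: algebra_simps)
  moreover have "e * c = 0"
    unfolding c_def
    using projection_mult_eq_0_of_le_compl[OF e(1) proj_meet_mem[OF q p'] p e(2)
        proj_meet_le_right[OF q p']]
    by simp
  ultimately have "e * (1 - q) = e"
    using \<open>e * f = 0\<close> \<open>e * a = 0\<close> by (simp add: algebra_simps)
  then have "e \<preceq> b"
    unfolding b_def using le_proj_meetI[OF p q' e(1) e(2)] projection_le_iff_mult_right[OF e(1) q']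
    by simp
  then have "e = e * b"
    using projection_le_iff_mult_right[OF e(1)] proj_meet_mem[OF p q'] unfolding b_def by simp
  then show ?thesis
    using \<open>e * b = 0\<close> unfolding e_def by simp
qed

end

theorem corollary3p5:
  fixes A Apos :: "'a::real_algebra_1 set" and p q :: 'a
  assumes "synaptic_algebra A Apos"
    and "p \<in> projections A" and "q \<in> projections A"
  defines "rp \<equiv> proj_meet A Apos (proj_meet A Apos p (proj_join A Apos (orthocomp p) q))
                   (proj_join A Apos (orthocomp p) (orthocomp q))"
    and "rq \<equiv> proj_meet A Apos (proj_meet A Apos q (proj_join A Apos p (orthocomp q)))
                   (proj_join A Apos (orthocomp p) (orthocomp q))"
  shows "(p * q = q * p \<longleftrightarrow> rp = 0 \<and> rq = 0) \<and> (rp = 0 \<and> rq = 0 \<longleftrightarrow> rp * rq = rq * rp)"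
proof -
  interpret synaptic A Apos
    by (rule synaptic.intro) (rule assms(1))
  have p: "p \<in> P" and q: "q \<in> P" by fact+
  have rp: "rp = generic_part p q"
    unfolding rp_def generic_part_def orthocomp_def ..
  have rq: "rq = generic_part q p"
    unfolding rq_def generic_part_def orthocomp_def
    using proj_join_commute one_minus_projection p q by metis
  have "p * q = q * p \<longleftrightarrow> rp = 0 \<and> rq = 0"
    unfolding rp rq
    using generic_part_eq_0_of_commute[OF p q] generic_part_eq_0_of_commute[OF q p]
      commute_of_generic_part_eq_0[OF p q]
    by auto
  moreover have "rp * rq = rq * rp \<Longrightarrow> rp = 0 \<and> rq = 0"
    unfolding rp rq
    using generic_part_eq_0_of_commute_generic_part[OF p q]
      generic_part_eq_0_of_commute_generic_part[OF q p]
    by auto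
  ultimately show ?thesis
    by auto
qed

end
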